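(* Let $\Delta$ be the closed triangle in the Euclidean plane with side lengths $100$, $100$ and $90$. Then there exist $16$ closed rectangles, each of size $20\times 10$, all contained in $\Delta$ and with pairwise disjoint interiors.
   Context: Rectangles may be placed at any position and with any orientation in the plane (they need not be parallel to one another or to any side of the triangle). *)

theory Defs
  imports "HOL-Analysis.Analysis"
begin

text \<open>Every closed a x b rectangle in the plane, at any
position and orientation, has this form for some z and some w with norm 1.\<close>
definition rect :: "complex \<Rightarrow> complex \<Rightarrow> real \<Rightarrow> real \<Rightarrow> complex set" where
  "rect z w a b = {z + of_real s * w + of_real t * (\<i> * w) | s t.
      0 \<le> s \<and> s \<le> a \<and> 0 \<le> t \<and> t \<le> b}"

text \<open>Vertices of the isosceles triangle with sides 100, 100, 90:
base from (-45,0) to (45,0), apex at (0, sqrt 7975), since 100^2 - 45^2 = 7975.\<close>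
definition triA :: complex where "triA = Complex (-45) 0"
definition triB :: complex where "triB = Complex 45 0"
definition triC :: complex where "triC = Complex 0 (sqrt 7975)"

definition Delta :: "complex set" where
  "Delta = convex hull {triA, triB, triC}"

end

(*
  The sixteen rectangles are given explicitly, with rational corners and with rational
  unit directions (m^2 - n^2, 2mn) / (m^2 + n^2), so every check is exact rational
  arithmetic.  The maximum of a linear functional n over a rectangle is attained at a vertex
  and has a closed form (rect_support).  Hence a rectangle lies in a half-plane as soon as one
  numerical inequality holds; containment in Delta reduces to three such inequalities against a
  slightly smaller triangle with rational edges, and disjointness of the interiors of two
  rectangles to a separating line for each of the 120 pairs.
*)
theory Submission
  imports Defs
begin

text \<open>For \<open>a, b \<ge> 0\<close> this is the maximum of \<open>n \<bullet> p\<close> over \<open>p \<in> rect z w a b\<close>.\<close>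
definition rect_support :: "complex \<Rightarrow> complex \<Rightarrow> complex \<Rightarrow> real \<Rightarrow> real \<Rightarrow> real" where
  "rect_support n z w a b = n \<bullet> z + max 0 (a * (n \<bullet> w)) + max 0 (b * (n \<bullet> (\<i> * w)))"

lemma mult_le_max_zero_mult:
  fixes s a x :: real
  assumes "0 \<le> s" "s \<le> a"
  shows "s * x \<le> max 0 (a * x)"
proof (cases "0 \<le> x")
  case True
  then show ?thesis using assms mult_right_mono by fastforce
next
  case False
  then show ?thesis using assms by (simp add: mult_nonneg_nonpos)
qed

lemma rect_subset_halfspace_le:
  assumes "rect_support n z w a b \<le> c"
  shows "rect z w a b \<subseteq> {p. n \<bullet> p \<le> c}"
proof
  fix p assume "p \<in> rect z w a b"
  then obtain s t where p: "p = z + of_real s * w + of_real t * (\<i> * w)"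
    and st: "0 \<le> s" "s \<le> a" "0 \<le> t" "t \<le> b"
    unfolding rect_def by blast
  have "n \<bullet> p = n \<bullet> z + s * (n \<bullet> w) + t * (n \<bullet> (\<i> * w))"
    unfolding p by (simp add: inner_add_right flip: scaleR_conv_of_real)
  also have "\<dots> \<le> rect_support n z w a b"
    unfolding rect_support_def
    using mult_le_max_zero_mult[OF st(1,2)] mult_le_max_zero_mult[OF st(3,4)]
    by (intro add_mono) auto
  finally show "p \<in> {p. n \<bullet> p \<le> c}" using assms by simp
qed

lemma interior_rect_disjoint:
  assumes "n \<noteq> 0"
    and "rect_support n z w a b \<le> c" and "rect_support (- n) z' w' a' b' \<le> - c"
  shows "interior (rect z w a b) \<inter> interior (rect z' w' a' b') = {}"
proof -
  have "interior (rect z w a b) \<subseteq> {p. n \<bullet> p < c}"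
    using interior_mono[OF rect_subset_halfspace_le[OF assms(2)]] assms(1) by simp
  moreover have "interior (rect z' w' a' b') \<subseteq> {p. - n \<bullet> p < - c}"
    using interior_mono[OF rect_subset_halfspace_le[OF assms(3)]] assms(1) by simp
  ultimately show ?thesis by fastforce
qed

definition separated_by ::
    "real \<Rightarrow> real \<Rightarrow> complex \<times> real \<Rightarrow> complex \<times> complex \<Rightarrow> complex \<times> complex \<Rightarrow> bool" where
  "separated_by a b s p q \<longleftrightarrow> fst s \<noteq> 0
    \<and> rect_support (fst s) (fst p) (snd p) a b \<le> snd s
    \<and> rect_support (- fst s) (fst q) (snd q) a b \<le> - snd s"

text \<open>Row \<open>k\<close> of the certificate \<open>ss\<close> lists, for each later rectangle of \<open>ps\<close>, a line
  \<open>n \<bullet> p = c\<close> separating it from the \<open>k\<close>-th one.\<close>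
fun pairwise_separated ::
    "real \<Rightarrow> real \<Rightarrow> (complex \<times> complex) list \<Rightarrow> (complex \<times> real) list list \<Rightarrow> bool" where
  "pairwise_separated a b [] ss \<longleftrightarrow> True"
| "pairwise_separated a b (p # ps) [] \<longleftrightarrow> ps = []"
| "pairwise_separated a b (p # ps) (s # ss) \<longleftrightarrow>
    list_all2 (\<lambda>s q. separated_by a b s p q) s ps \<and> pairwise_separated a b ps ss"

lemma separated_by_interior_disjoint:
  assumes "separated_by a b s p q"
  shows "interior (rect (fst p) (snd p) a b) \<inter> interior (rect (fst q) (snd q) a b) = {}"
  using assms unfolding separated_by_def by (intro interior_rect_disjoint) auto

lemma pairwise_separated_interior_disjoint:
  assumes "pairwise_separated a b ps ss" "i < j" "j < length ps"
  shows "interior (rect (fst (ps ! i)) (snd (ps ! i)) a b)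
    \<inter> interior (rect (fst (ps ! j)) (snd (ps ! j)) a b) = {}"
  using assms
proof (induction a b ps ss arbitrary: i j rule: pairwise_separated.induct)
  case (3 a b p ps s ss)
  then obtain j' where j: "j = Suc j'" "j' < length ps"
    by (cases j) auto
  show ?case
  proof (cases i)
    case 0
    have "separated_by a b (s ! j') p (ps ! j')"
      using "3.prems"(1) j(2) by (auto dest: list_all2_nthD2)
    then show ?thesis
      using 0 j(1) by (simp add: separated_by_interior_disjoint)
  next
    case (Suc i')
    then show ?thesis using "3.IH" "3.prems" j by simp
  qed
qed auto

text \<open>The triangle with the same base as \<open>Delta\<close> and apex lowered to height
  89.3028 < sqrt 7975; its rational edge equations make containment checkable by exact
  arithmetic.\<close>
definition lowered_triangle :: "complex set" where
  "lowered_triangle = {p. 0 \<le> Im p \<and> 893028 * Re p + 450000 * Im p \<le> 40186260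
      \<and> - 893028 * Re p + 450000 * Im p \<le> 40186260}"

lemma lowered_apex_in_Delta:
  assumes "0 \<le> h" "h \<le> sqrt 7975"
  shows "Complex 0 h \<in> Delta"
proof -
  define \<mu> where "\<mu> = h / sqrt 7975"
  have "0 \<le> \<mu>" "\<mu> \<le> 1"
    using assms unfolding \<mu>_def by auto
  moreover have "Complex 0 h = ((1 - \<mu>) / 2) *\<^sub>R triA + ((1 - \<mu>) / 2) *\<^sub>R triB + \<mu> *\<^sub>R triC"
    using assms unfolding \<mu>_def triA_def triB_def triC_def by (simp add: complex_eq_iff)
  ultimately show ?thesis
    unfolding Delta_def convex_hull_3 by force
qed

lemma lowered_triangle_subset_Delta: "lowered_triangle \<subseteq> Delta"
proof
  fix p assume "p \<in> lowered_triangle"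
  then have h: "0 \<le> Im p" "893028 * Re p + 450000 * Im p \<le> 40186260"
    "- 893028 * Re p + 450000 * Im p \<le> 40186260"
    unfolding lowered_triangle_def by auto
  define h0 :: real where "h0 = 893028 / 10000"
  define c where "c = Im p / h0"
  define u where "u = (1 - c) / 2 - Re p / 90"
  define v where "v = (1 - c) / 2 + Re p / 90"
  have "0 \<le> u" "0 \<le> v" "0 \<le> c" "u + v + c = 1"
    using h unfolding u_def v_def c_def h0_def by (auto simp: field_simps)
  moreover have "p = u *\<^sub>R triA + v *\<^sub>R triB + c *\<^sub>R Complex 0 h0"
    unfolding u_def v_def c_def h0_def triA_def triB_def by (simp add: complex_eq_iff field_simps)
  ultimately have "p \<in> convex hull {triA, triB, Complex 0 h0}"
    unfolding convex_hull_3 by blast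
  moreover have "h0 \<le> sqrt 7975"
    unfolding h0_def by (rule real_le_rsqrt) (simp add: power2_eq_square)
  then have "convex hull {triA, triB, Complex 0 h0} \<subseteq> Delta"
    using lowered_apex_in_Delta[of h0]
    by (intro hull_minimal) (auto simp: Delta_def h0_def hull_inc convex_convex_hull)
  ultimately show "p \<in> Delta" by blast
qed

lemma rect_subset_Delta:
  assumes "rect_support (Complex 0 (-1)) z w a b \<le> 0"
    and "rect_support (Complex 893028 450000) z w a b \<le> 40186260"
    and "rect_support (Complex (-893028) 450000) z w a b \<le> 40186260"
  shows "rect z w a b \<subseteq> Delta"
proof -
  have "rect z w a b \<subseteq> lowered_triangle"
    using rect_subset_halfspace_le[OF assms(1)] rect_subset_halfspace_le[OF assms(2)]
      rect_subset_halfspace_le[OF assms(3)]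
    by (auto simp: lowered_triangle_def inner_complex_def subset_iff)
  then show ?thesis using lowered_triangle_subset_Delta by blast
qed

definition placements :: "(complex \<times> complex) list" where
  "placements =
    [(Complex (-312889/20000) (3939/100000), Complex (9999931879/10000068121) (52200000/10000068121)),
     (Complex (104941/50000) (890299/50000), Complex (6263000839/13736999161) (-12226200000/13736999161)),
     (Complex (618571/25000) (1794297/100000), Complex (61423479/138576521) (-124220000/138576521)),
     (Complex (-22423/1000) (7007/50000), Complex (6419054719/13580945281) (11968200000/13580945281)),
     (Complex (-838827/25000) (2259/5000), Complex (6201373311/13798626689) (12326600000/13798626689)),
     (Complex (1307713/100000) (915977/50000), Complex (6263000839/13736999161) (-12226200000/13736999161)),
     (Complex (-1494569/100000) (596857/20000), Complex (697233319/4302766681) (-4245900000/4302766681)),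
     (Complex (-21834/3125) (1781719/50000), Complex (62631231/137368769) (-122260000/137368769)),
     (Complex (782489/50000) (720363/20000), Complex (6112103391/13887896609) (-12470600000/13887896609)),
     (Complex (-612459/25000) (1829313/100000), Complex (6515104911/13484895089) (11806600000/13484895089)),
     (Complex (182249/50000) (739929/20000), Complex (6244393911/13755606089) (-12256600000/13755606089)),
     (Complex (-167577/25000) (1791323/50000), Complex (9426924279/10573075721) (4787800000/10573075721)),
     (Complex (327187/50000) (5395277/100000), Complex (9963151/22036849) (-19656000/22036849)),
     (Complex (-372533/25000) (150013/4000), Complex (6212705319/13787294681) (12308200000/13787294681)),
     (Complex (-51357/20000) (2457407/50000), Complex (2344573911/2655426089) (1246700000/2655426089)),
     (Complex (-677/200) (1506937/25000), Complex (1549079431/3450920569) (3083700000/3450920569))]"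

definition separators :: "(complex \<times> real) list list" where
  "separators =
    [[(Complex 12226200000 6263000839, 126659729504),
      (Complex 124220000 61423479, 2666631010),
      (Complex (-11968200000) 6419054719, 260782838210),
      (Complex (-12326600000) 6201373311, 336070329110),
      (Complex 12226200000 6263000839, 195379449720),
      (Complex (-52200000) 9999931879, 101446641802),
      (Complex (-52200000) 9999931879, 139719954331),
      (Complex 12470600000 6112103391, 265484911170),
      (Complex (-11806600000) 6515104911, 329577426718),
      (Complex 12256600000 6244393911, 195888769283),
      (Complex (-52200000) 9999931879, 229911639529),
      (Complex (-52200000) 9999931879, 230765379435),
      (Complex (-52200000) 9999931879, 238509506481),
      (Complex (-52200000) 9999931879, 296411656283),
      (Complex (-52200000) 9999931879, 352079304827)],
     [(Complex 124220000 61423479, 3477526080),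
      (Complex (-12226200000) (-6263000839), (-44934518157)),
      (Complex (-12326600000) 6201373311, 250473695463),
      (Complex 12226200000 6263000839, 274584176785),
      (Complex (-4245900000) (-697233319), (-10851746682)),
      (Complex (-6263000839) 12226200000, 204623235061),
      (Complex 12226200000 6263000839, 343303657043),
      (Complex (-11806600000) 6515104911, 249825948904),
      (Complex 12226200000 6263000839, 275107457982),
      (Complex (-4787800000) 9426924279, 264000144865),
      (Complex 12226200000 6263000839, 345643156044),
      (Complex (-6263000839) 12226200000, 378201888034),
      (Complex (-6263000839) 12226200000, 410765998614),
      (Complex (-6263000839) 12226200000, 481359672536)],
     [(Complex (-124220000) (-61423479), (-1827870816)),
      (Complex (-12326600000) 6201373311, 111336570062),
      (Complex (-124220000) (-61423479), (-4175161235)),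
      (Complex (-4245900000) (-697233319), (-58971625937)),
      (Complex (-124220000) (-61423479), (-3460774460)),
      (Complex (-61423479) 124220000, 722813485),
      (Complex (-11806600000) 6515104911, 116597757749),
      (Complex (-6244393911) 12256600000, 110496821519),
      (Complex (-4787800000) 9426924279, 210254791103),
      (Complex (-9963151) 19656000, 330366382),
      (Complex (-12308200000) 6212705319, 111669814724),
      (Complex (-1246700000) 2344573911, 64827253067),
      (Complex (-61423479) 124220000, 4202335731)],
     [(Complex (-12326600000) 6201373311, 415802282403),
      (Complex 12226200000 6263000839, 113654238374),
      (Complex 4245900000 697233319, (-42666614327)),
      (Complex 122260000 62631231, 452276276),
      (Complex 12470600000 6112103391, 181073902900),
      (Complex (-11806600000) 6515104911, 406068123318),
      (Complex 12256600000 6244393911, 113830101502),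
      (Complex 6419054719 11968200000, 257556233235),
      (Complex 19656000 9963151, 294111144),
      (Complex 6212705319 12308200000, 255261806937),
      (Complex 6419054719 11968200000, 350546632346),
      (Complex 1549079431 3083700000, 108124373370)],
     [(Complex 12326600000 (-6201373311), (-184403466079)),
      (Complex 4245900000 697233319, (-67088807072)),
      (Complex 122260000 62631231, (-239188609)),
      (Complex 12470600000 6112103391, 110467616774),
      (Complex 6515104911 11806600000, 56302304477),
      (Complex 12256600000 6244393911, 44501034402),
      (Complex 9426924279 4787800000, (-17762501423)),
      (Complex 19656000 9963151, 182913495),
      (Complex 6201373311 12326600000, 221672715075),
      (Complex 6201373311 12326600000, 331685891457),
      (Complex 6201373311 12326600000, 397704634089)],
     [(Complex (-4245900000) (-697233319), (-34337185468)),
      (Complex (-62631231) 122260000, 1733795512),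
      (Complex 12226200000 6263000839, 412023377260),
      (Complex (-11806600000) 6515104911, 186690640120),
      (Complex (-6244393911) 12256600000, 149379302511),
      (Complex (-4787800000) 9426924279, 240139814173),
      (Complex (-9963151) 19656000, 392651943),
      (Complex (-12308200000) 6212705319, 184631519856),
      (Complex (-6263000839) 12226200000, 379526859879),
      (Complex (-6263000839) 12226200000, 450120533801)],
     [(Complex 122260000 62631231, 1363687397),
      (Complex 4245900000 697233319, 45968823082),
      (Complex (-11806600000) 6515104911, 389655540212),
      (Complex 12256600000 6244393911, 204963685317),
      (Complex (-697233319) 4245900000, 146959783544),
      (Complex 19656000 9963151, 439913240),
      (Complex (-697233319) 4245900000, 153377567917),
      (Complex (-697233319) 4245900000, 173799434031),
      (Complex (-697233319) 4245900000, 197711338488)],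
     [(Complex 12470600000 6112103391, 344877522971),
      (Complex (-11806600000) 6515104911, 361538509912),
      (Complex 12256600000 6244393911, 275371658910),
      (Complex (-4787800000) 9426924279, 369784660181),
      (Complex 122260000 62631231, 3459339202),
      (Complex (-12308200000) 6212705319, 361893443080),
      (Complex (-62631231) 122260000, 5481967698),
      (Complex (-62631231) 122260000, 6187893808)],
     [(Complex (-12470600000) (-6112103391), (-224569171180)),
      (Complex (-12470600000) (-6112103391), (-415026370402)),
      (Complex (-4787800000) 9426924279, 317219344032),
      (Complex (-9963151) 19656000, 553307016),
      (Complex (-12308200000) 6212705319, 223777298734),
      (Complex (-1246700000) 2344573911, 91684709750),
      (Complex (-6112103391) 12470600000, 562950340025)],
     [(Complex 12256600000 6244393911, 158718170651),
      (Complex 9426924279 4787800000, 69954639314),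
      (Complex 19656000 9963151, 365638214),
      (Complex 6212705319 12308200000, 361302393797),
      (Complex 6515104911 11806600000, 444805401234),
      (Complex 1549079431 3083700000, 134698552675)],
     [(Complex (-4787800000) 9426924279, 350635434542),
      (Complex 12256600000 6244393911, 414895120865),
      (Complex (-12308200000) 6212705319, 300694983221),
      (Complex (-6244393911) 12256600000, 524556878890),
      (Complex (-6244393911) 12256600000, 595312116455)],
     [(Complex 19656000 9963151, 666044438),
      (Complex (-12308200000) 6212705319, 416307306605),
      (Complex (-4787800000) 9426924279, 475583617851),
      (Complex (-4787800000) 9426924279, 529997515964)],
     [(Complex (-12308200000) 6212705319, 335528034032),
      (Complex (-1246700000) 2344573911, 118385480862),
      (Complex (-3083700000) 1549079431, 83605562067)],
     [(Complex 2344573911 1246700000, 55229715466),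
      (Complex 6212705319 12308200000, 682688657572)],
     [(Complex (-1246700000) 2344573911, 145266066416)]]"

lemma placements_norm_and_subset_Delta:
  assumes "(z, w) \<in> set placements"
  shows "norm w = 1 \<and> rect z w 20 10 \<subseteq> Delta"
proof -
  have "list_all (\<lambda>(z, w). norm w = 1
      \<and> rect_support (Complex 0 (-1)) z w 20 10 \<le> 0
      \<and> rect_support (Complex 893028 450000) z w 20 10 \<le> 40186260
      \<and> rect_support (Complex (-893028) 450000) z w 20 10 \<le> 40186260) placements"
    by (simp add: placements_def rect_support_def inner_complex_def cmod_def power2_eq_square)
  then have "norm w = 1"
    and "rect_support (Complex 0 (-1)) z w 20 10 \<le> 0"
    and "rect_support (Complex 893028 450000) z w 20 10 \<le> 40186260"
    and "rect_support (Complex (-893028) 450000) z w 20 10 \<le> 40186260"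
    using assms by (auto simp: list_all_iff)
  then show ?thesis using rect_subset_Delta by blast
qed

lemma placements_pairwise_separated: "pairwise_separated 20 10 placements separators"
  by (simp add: placements_def separators_def separated_by_def rect_support_def inner_complex_def
      complex_eq_iff)

theorem mainTheorem2:
  shows "\<exists>z w :: nat \<Rightarrow> complex.
     (\<forall>i<16. norm (w i) = 1 \<and> rect (z i) (w i) 20 10 \<subseteq> Delta) \<and>
     (\<forall>i<16. \<forall>j<16. i \<noteq> j \<longrightarrow>
        interior (rect (z i) (w i) 20 10) \<inter> interior (rect (z j) (w j) 20 10) = {})"
proof -
  let ?z = "\<lambda>i. fst (placements ! i)" and ?w = "\<lambda>i. snd (placements ! i)"
  have length_placements: "length placements = 16"
    by (simp add: placements_def)
  have "norm (?w i) = 1 \<and> rect (?z i) (?w i) 20 10 \<subseteq> Delta" if "i < 16" for i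
    using placements_norm_and_subset_Delta[of "?z i" "?w i"] that length_placements by simp
  moreover have "interior (rect (?z i) (?w i) 20 10) \<inter> interior (rect (?z j) (?w j) 20 10) = {}"
    if "i < 16" "j < 16" "i \<noteq> j" for i j
  proof -
    consider "i < j" | "j < i"
      using \<open>i \<noteq> j\<close> by linarith
    then show ?thesis
      using pairwise_separated_interior_disjoint[OF placements_pairwise_separated]
        that length_placements
      by cases (auto simp: Int_commute)
  qed
  ultimately show ?thesis
    by (intro exI[of _ ?z] exI[of _ ?w]) blast
qed

end
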